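(* Let $n\ge1$, $m\ge2$, $\alpha\in(0,1)$, $\bar g_a>0$, and let $W$ be a real $mn\times mn$ matrix satisfying (S), (A1), (A2), (A3) from the context, with largest eigenvalue $\mu_{\max}(W)$ and spectral norm $\|W\|$. If $\mu_{\max}(W)<2(1+\alpha)$ and $$\bar g_a>\frac{2\alpha^2(1+\alpha)\|W\|^2}{\sigma^2},\qquad \sigma=2(1+\alpha)-\mu_{\max}(W),$$ then the origin is a globally asymptotically stable equilibrium of the system $$\dot{\bar s}=W\bar f(\bar s)-\bar s-\bar a,\qquad \dot{\bar a}=\bar g_a\bar f(\bar s)-\alpha\bar a,\qquad (\bar s,\bar a)\in\mathbb{R}^{mn}\times\mathbb{R}^{mn}.$$
   Context: For $s\in\mathbb{R}^{mn}$ write $s=(s_{11},\dots,s_{1m},\dots,s_{n1},\dots,s_{nm})^T$. Define $f_{ij}(s)=e^{s_{ij}}/\sum_{l=1}^m e^{s_{il}}$ and $\bar f(s)=f(s)-\frac1m\mathbf 1_{mn}$, where $\mathbf 1_k$ is the all-ones vector in $\mathbb{R}^k$. The matrix $W$ is viewed as an $n\times n$ array of $m\times m$ blocks $W_{i,k}$, and: (S) $W_{i,i}=0$; (A1) $W$ is symmetric; (A2) $W_{i,k}\mathbf 1_m=\lambda_{ik}\mathbf 1_m$ for scalars $\lambda_{ik}$; (A3) $\lambda_{ik}=\lambda_{ki}$. $\|\cdot\|$ denotes the Euclidean norm and the induced matrix norm. *)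

theory Defs
  imports "HOL-Analysis.Analysis"
begin

text \<open>Vectors in R^{mn} are indexed by pairs (i,j) with i in the finite type 'n (n blocks)
  and j in the finite type 'm (m entries per block).  Entry W_{(i,j),(k,l)} of W is
  W $ (i,j) $ (k,l), so the block W_{i,k} is the m x m matrix (j,l) |-> W $ (i,j) $ (k,l).\<close>

definition softmax :: "real^('n::finite \<times> 'm::finite) \<Rightarrow> real^('n \<times> 'm)" where
  "softmax s = (\<chi> p. exp (s $ p) / (\<Sum>l\<in>UNIV. exp (s $ (fst p, l))))"

definition fbar :: "real^('n::finite \<times> 'm::finite) \<Rightarrow> real^('n \<times> 'm)" where
  "fbar s = softmax s - (\<chi> k. 1 / real CARD('m))"

definition mu_max :: "real^'k::finite^'k \<Rightarrow> real" where
  "mu_max A = Max {\<mu>. \<exists>v. v \<noteq> 0 \<and> A *v v = \<mu> *\<^sub>R v}"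

definition spec_norm :: "real^'k::finite^'k \<Rightarrow> real" where
  "spec_norm A = onorm (\<lambda>x. A *v x)"

definition is_solution :: "('a::real_normed_vector \<Rightarrow> 'a) \<Rightarrow> (real \<Rightarrow> 'a) \<Rightarrow> bool" where
  "is_solution F x \<longleftrightarrow> (\<forall>t\<ge>0. (x has_vector_derivative F (x t)) (at t within {0..}))"

definition globally_asymptotically_stable ::
  "('a::real_normed_vector \<Rightarrow> 'a) \<Rightarrow> 'a \<Rightarrow> bool" where
  "globally_asymptotically_stable F xe \<longleftrightarrow>
     F xe = 0 \<and>
     (\<forall>\<xi>. \<exists>x. is_solution F x \<and> x 0 = \<xi>) \<and>
     (\<forall>\<epsilon>>0. \<exists>\<delta>>0. \<forall>x. is_solution F x \<and> dist (x 0) xe < \<delta> \<longrightarrow>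
         (\<forall>t\<ge>0. dist (x t) xe < \<epsilon>)) \<and>
     (\<forall>x. is_solution F x \<longrightarrow> (x \<longlongrightarrow> xe) at_top)"

end

theory Submission
  imports Defs
begin

text \<open>
  Write g = alpha - eps, u = fbar s and let Phi be the row-wise log-sum-exp potential, whose
  gradient is fbar. Then
    V (s, a) = ga Phi s + |a|^2 / 2 - g <a, s> + g (1 + alpha) |s|^2 / 2
  is a strict Lyapunov function: along the flow its derivative is
    ga <u, W u> - ga (1 + g) <u, s> - eps |a|^2 - g <a, W u> + g (1 + alpha) <s, W u>
      - g (1 + alpha) |s|^2.
  Row by row, the inequality between logarithmic and arithmetic mean makes the softmax
  1/2-cocoercive, so 2 |u|^2 <= <u, s>; the Rayleigh quotient gives <u, W u> <= mu_max W |u|^2;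
  and Young's inequality absorbs the two cross terms. The gain condition is exactly what leaves
  room for a choice of eps and of the absorbed fraction theta. Since fbar is Lipschitz, Picard
  iteration gives solutions for all times, and a coercive strict Lyapunov function yields global
  asymptotic stability.
\<close>

lemma integral_power_atLeastAtMost_0:
  assumes "0 \<le> t"
  shows "integral {0..t} (\<lambda>x::real. x ^ k) = t ^ Suc k / Suc k"
proof -
  have "DERIV (\<lambda>x::real. x ^ Suc k / Suc k) x :> x ^ k" for x
    using DERIV_cdivide[OF DERIV_pow[of "Suc k" x], of "Suc k"] by (simp del: of_nat_Suc)
  then have "((\<lambda>x::real. x ^ k) has_integral t ^ Suc k / Suc k - 0 ^ Suc k / Suc k) {0..t}"
    using assms by (intro fundamental_theorem_of_calculus)
      (auto simp: has_real_derivative_iff_has_vector_derivative[symmetric] intro: DERIV_subset)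
  then show ?thesis by (simp add: integral_unique)
qed

primrec picard_iterate :: "('a::banach \<Rightarrow> 'a) \<Rightarrow> 'a \<Rightarrow> nat \<Rightarrow> real \<Rightarrow> 'a" where
  "picard_iterate F \<xi> 0 = (\<lambda>t. \<xi>)"
| "picard_iterate F \<xi> (Suc k) = (\<lambda>t. \<xi> + integral {0..t} (\<lambda>\<tau>. F (picard_iterate F \<xi> k \<tau>)))"

lemma continuous_on_picard_iterate:
  assumes "continuous_on UNIV F"
  shows "continuous_on {0..T} (picard_iterate F \<xi> k)"
proof (induction k)
  case (Suc k)
  have "continuous_on {0..T} (\<lambda>\<tau>. F (picard_iterate F \<xi> k \<tau>))"
    using continuous_on_compose2[OF assms Suc] by auto
  then have "continuous_on {0..T} (\<lambda>t. integral {0..t} (\<lambda>\<tau>. F (picard_iterate F \<xi> k \<tau>)))"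
    by (rule indefinite_integral_continuous_1[OF integrable_continuous_real])
  then show ?case by (auto intro!: continuous_intros)
qed simp

lemma integrable_picard_iterate:
  assumes "continuous_on UNIV F"
  shows "(\<lambda>\<tau>. F (picard_iterate F \<xi> k \<tau>)) integrable_on {0..T}"
  using continuous_on_compose2[OF assms continuous_on_picard_iterate[OF assms]]
  by (intro integrable_continuous_real) auto

lemma picard_iterate_step_bound:
  assumes lip: "L-lipschitz_on UNIV F" and "0 \<le> t"
  shows "norm (picard_iterate F \<xi> (Suc k) t - picard_iterate F \<xi> k t)
           \<le> norm (F \<xi>) * L ^ k * t ^ Suc k / fact (Suc k)"
  using \<open>0 \<le> t\<close>
proof (induction k arbitrary: t)
  case 0
  then show ?case by simp
next
  case (Suc k)
  let ?p = "picard_iterate F \<xi>" and ?B = "norm (F \<xi>)"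
  have contF: "continuous_on UNIV F"
    using lip by (rule lipschitz_on_continuous_on)
  have L: "0 \<le> L"
    using lip by (rule lipschitz_on_nonneg)
  have "?p (Suc (Suc k)) t - ?p (Suc k) t
      = integral {0..t} (\<lambda>\<tau>. F (?p (Suc k) \<tau>)) - integral {0..t} (\<lambda>\<tau>. F (?p k \<tau>))"
    by (simp only: picard_iterate.simps(2) add_diff_cancel_left)
  also have "\<dots> = integral {0..t} (\<lambda>\<tau>. F (?p (Suc k) \<tau>) - F (?p k \<tau>))"
    by (intro integral_diff[symmetric] integrable_picard_iterate[OF contF])
  also have "norm \<dots> \<le> integral {0..t} (\<lambda>\<tau>. L * (?B * L ^ k / fact (Suc k)) * \<tau> ^ Suc k)"
  proof (rule integral_norm_bound_integral)
    show "(\<lambda>\<tau>. F (?p (Suc k) \<tau>) - F (?p k \<tau>)) integrable_on {0..t}"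
      by (intro integrable_diff integrable_picard_iterate[OF contF])
    fix \<tau> assume "\<tau> \<in> {0..t}"
    then have "norm (F (?p (Suc k) \<tau>) - F (?p k \<tau>)) \<le> L * norm (?p (Suc k) \<tau> - ?p k \<tau>)"
      using lipschitz_onD[OF lip] by (simp add: dist_norm)
    also have "\<dots> \<le> L * (?B * L ^ k * \<tau> ^ Suc k / fact (Suc k))"
      using Suc.IH \<open>\<tau> \<in> {0..t}\<close> L by (intro mult_left_mono) auto
    finally show "norm (F (?p (Suc k) \<tau>) - F (?p k \<tau>))
        \<le> L * (?B * L ^ k / fact (Suc k)) * \<tau> ^ Suc k"
      by (simp add: field_simps)
  qed (intro integrable_continuous_real continuous_intros)
  also have "\<dots> = ?B * L ^ Suc k * t ^ Suc (Suc k) / fact (Suc (Suc k))"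
    using integral_power_atLeastAtMost_0[OF Suc.prems, of "Suc k"]
    by (simp del: of_nat_Suc fact_Suc) (simp add: fact_Suc field_simps)
  finally show ?case .
qed

lemma picard_iterate_uniform_limit:
  assumes lip: "L-lipschitz_on UNIV F"
  shows "\<exists>x. \<forall>T. uniform_limit {0..T} (picard_iterate F \<xi>) x sequentially"
proof -
  let ?p = "picard_iterate F \<xi>" and ?B = "norm (F \<xi>)"
  have L: "0 \<le> L"
    using lip by (rule lipschitz_on_nonneg)
  have telescope: "(\<lambda>n t. \<xi> + (\<Sum>i<n. ?p (Suc i) t - ?p i t)) = ?p"
  proof (intro ext)
    show "\<xi> + (\<Sum>i<n. ?p (Suc i) t - ?p i t) = ?p n t" for n t
      using sum_lessThan_telescope[of "\<lambda>i. ?p i t" n] by simp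
  qed
  have "uniform_limit {0..T} ?p (\<lambda>t. \<xi> + (\<Sum>i. ?p (Suc i) t - ?p i t)) sequentially" for T
  proof -
    \<comment> \<open>the terms of the exponential series of ?B * T * exp (L * T)\<close>
    define M where "M k = ?B * T * (inverse (fact k) * (L * T) ^ k)" for k
    have "norm (?p (Suc k) t - ?p k t) \<le> M k" if "t \<in> {0..T}" for k t
    proof -
      have "norm (?p (Suc k) t - ?p k t) \<le> ?B * L ^ k * t ^ Suc k / fact (Suc k)"
        using picard_iterate_step_bound[OF lip] that by auto
      also have "\<dots> \<le> ?B * L ^ k * T ^ Suc k / fact k"
      proof (rule frac_le)
        show "?B * L ^ k * t ^ Suc k \<le> ?B * L ^ k * T ^ Suc k"
          using that L by (intro mult_left_mono power_mono) auto
        show "fact k \<le> (fact (Suc k) :: real)"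
          by (rule fact_mono) simp
      qed (use L that in auto)
      also have "\<dots> = M k"
        by (simp add: M_def field_simps power_mult_distrib)
      finally show ?thesis .
    qed
    moreover have "summable M"
      unfolding M_def by (intro summable_mult summable_exp)
    ultimately have "uniform_limit {0..T} (\<lambda>n t. \<Sum>i<n. ?p (Suc i) t - ?p i t)
        (\<lambda>t. \<Sum>i. ?p (Suc i) t - ?p i t) sequentially"
      by (intro Weierstrass_m_test) auto
    then have "uniform_limit {0..T} (\<lambda>n t. \<xi> + (\<Sum>i<n. ?p (Suc i) t - ?p i t))
        (\<lambda>t. \<xi> + (\<Sum>i. ?p (Suc i) t - ?p i t)) sequentially"
      by (intro uniform_limit_add uniform_limit_const)
    then show ?thesis
      by (simp only: telescope)
  qed
  then show ?thesis by blast
qed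

lemma integral_equation_imp_solution:
  fixes F :: "'a::banach \<Rightarrow> 'a"
  assumes contF: "continuous_on UNIV F"
    and contx: "\<And>T. continuous_on {0..T} x"
    and x: "\<And>t. 0 \<le> t \<Longrightarrow> x t = x 0 + integral {0..t} (\<lambda>\<tau>. F (x \<tau>))"
  shows "is_solution F x"
  unfolding is_solution_def
proof (intro allI impI)
  fix t :: real assume "0 \<le> t"
  have contFx: "continuous_on {0..t+1} (\<lambda>\<tau>. F (x \<tau>))"
    using continuous_on_compose2[OF contF contx] by auto
  have "((\<lambda>u. x 0 + integral {0..u} (\<lambda>\<tau>. F (x \<tau>))) has_vector_derivative F (x t))
      (at t within {0..t+1})"
    using integral_has_vector_derivative[OF contFx, of t] \<open>0 \<le> t\<close>
    by (auto intro!: derivative_eq_intros)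
  then have "(x has_vector_derivative F (x t)) (at t within {0..t+1})"
  proof (rule has_vector_derivative_transform_within[where d=1])
    show "x 0 + integral {0..u} (\<lambda>\<tau>. F (x \<tau>)) = x u" if "u \<in> {0..t+1}" for u
      using x[of u] that by simp
  qed (use \<open>0 \<le> t\<close> in auto)
  moreover have "at t within {0..t+1} = at t within {0..}"
    by (rule at_within_nhd[where S="{..<t+1}"]) auto
  ultimately show "(x has_vector_derivative F (x t)) (at t within {0..})"
    by simp
qed

lemma lipschitz_imp_solution_exists:
  fixes F :: "'a::banach \<Rightarrow> 'a"
  assumes lip: "L-lipschitz_on UNIV F"
  shows "\<exists>x. is_solution F x \<and> x 0 = \<xi>"
proof -
  let ?p = "picard_iterate F \<xi>"
  have contF: "continuous_on UNIV F"
    using lip by (rule lipschitz_on_continuous_on)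
  obtain x where lim: "\<And>T. uniform_limit {0..T} ?p x sequentially"
    using picard_iterate_uniform_limit[OF lip] by blast
  have contx: "continuous_on {0..T} x" for T
    by (rule uniform_limit_theorem[OF _ lim])
      (auto intro!: always_eventually continuous_on_picard_iterate[OF contF])
  have pointwise: "(\<lambda>n. ?p n t) \<longlonglongrightarrow> x t" if "0 \<le> t" for t
    using tendsto_uniform_limitI[OF lim, of t t] that by simp
  have "?p n 0 = \<xi>" for n
    by (cases n) simp_all
  then have x0: "x 0 = \<xi>"
    using pointwise[of 0] by (simp add: LIMSEQ_const_iff)
  have "x t = \<xi> + integral {0..t} (\<lambda>\<tau>. F (x \<tau>))" if "0 \<le> t" for t
  proof -
    have ul: "uniform_limit {0..t} (\<lambda>n \<tau>. F (?p n \<tau>)) (F \<circ> x) sequentially"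
      using lim lipschitz_on_uniformly_continuous[OF lip] by (rule uniform_limit_compose) auto
    have cont: "continuous_on {0..t} (\<lambda>\<tau>. F (?p n \<tau>))" for n
      by (rule continuous_on_compose2[OF contF continuous_on_picard_iterate[OF contF]]) simp
    obtain I J where I: "\<And>n. ((\<lambda>\<tau>. F (?p n \<tau>)) has_integral I n) {0..t}"
      and J: "((F \<circ> x) has_integral J) {0..t}" and "I \<longlonglongrightarrow> J"
      using uniform_limit_integral[OF ul cont trivial_limit_sequentially] by blast
    then have "(\<lambda>n. ?p (Suc n) t) \<longlonglongrightarrow> \<xi> + integral {0..t} (\<lambda>\<tau>. F (x \<tau>))"
      by (simp add: integral_unique[OF I] integral_unique[OF J, unfolded o_def] tendsto_add)
    moreover have "(\<lambda>n. ?p (Suc n) t) \<longlonglongrightarrow> x t"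
      using pointwise[OF that] by (rule LIMSEQ_Suc)
    ultimately show ?thesis
      using LIMSEQ_unique by blast
  qed
  then have "is_solution F x"
    using x0 by (intro integral_equation_imp_solution[OF contF contx]) auto
  with x0 show ?thesis by blast
qed

lemma ln_ge_two_mul_diff_div_add:
  fixes x :: real
  assumes "1 \<le> x"
  shows "2 * (x - 1) / (x + 1) \<le> ln x"
proof -
  let ?f = "\<lambda>x::real. ln x - 2 * (x - 1) / (x + 1)"
  have "?f 1 \<le> ?f x"
  proof (rule DERIV_nonneg_imp_nondecreasing[OF assms])
    fix y :: real assume y: "1 \<le> y" "y \<le> x"
    have "DERIV ?f y :> 1 / y - 4 / (y + 1)^2"
      using y by (auto intro!: derivative_eq_intros simp: field_simps power2_eq_square)
    moreover have "1 / y - 4 / (y + 1)^2 = (y - 1)^2 / (y * (y + 1)^2)"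
      using y by (simp add: field_split_simps) algebra
    moreover have "0 \<le> (y - 1)^2 / (y * (y + 1)^2)"
      using y by simp
    ultimately show "\<exists>d. DERIV ?f y :> d \<and> 0 \<le> d"
      by auto
  qed
  then show ?thesis by simp
qed

text \<open>The logarithmic mean (a - b) / (ln a - ln b) is at most the arithmetic mean, multiplied
  out.\<close>
lemma log_mean_le_arith_mean:
  fixes a b :: real
  assumes "0 < a" "0 < b"
  shows "2 * (a - b)^2 / (a + b) \<le> (a - b) * (ln a - ln b)"
proof -
  have *: "2 * (a - b)^2 / (a + b) \<le> (a - b) * (ln a - ln b)"
    if "0 < b" "b \<le> a" for a b :: real
  proof -
    have "0 < a * b + b * b"
      using that by (simp add: add_pos_pos)
    then have "2 * (a - b) / (a + b) = 2 * (a/b - 1) / (a/b + 1)"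
      using that by (simp add: field_split_simps)
    also have "\<dots> \<le> ln (a/b)"
      using that by (intro ln_ge_two_mul_diff_div_add) simp
    also have "\<dots> = ln a - ln b"
      using that by (simp add: ln_div)
    finally have "(a - b) * (2 * (a - b) / (a + b)) \<le> (a - b) * (ln a - ln b)"
      using that by (intro mult_left_mono) auto
    moreover have "2 * (a - b)^2 / (a + b) = (a - b) * (2 * (a - b) / (a + b))"
      by (simp add: power2_eq_square)
    ultimately show ?thesis
      by linarith
  qed
  show ?thesis
  proof (cases "b \<le> a")
    case False
    then show ?thesis
      using *[of a b] assms by (simp add: power2_commute add.commute algebra_simps)
  qed (use * assms in blast)
qed

lemma sum_zero_imp_sum_squares_le:
  fixes d :: "'a \<Rightarrow> real"
  assumes "finite I" and "sum d I = 0"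
  shows "2 * (\<Sum>l\<in>I. (d l)^2) \<le> (\<Sum>l\<in>I. \<bar>d l\<bar>)^2"
proof -
  define S where "S = (\<Sum>l\<in>I. \<bar>d l\<bar>)"
  have bound: "\<bar>d k\<bar> \<le> S / 2" if "k \<in> I" for k
  proof -
    have "\<bar>d k\<bar> = \<bar>sum d (I - {k})\<bar>"
      using assms that by (simp add: sum.remove)
    also have "\<dots> \<le> (\<Sum>l\<in>I - {k}. \<bar>d l\<bar>)"
      by (rule sum_abs)
    finally show ?thesis
      using assms that by (simp add: S_def sum.remove)
  qed
  have "(\<Sum>l\<in>I. (d l)^2) = (\<Sum>l\<in>I. \<bar>d l\<bar> * \<bar>d l\<bar>)"
    by (simp add: power2_eq_square)
  also have "\<dots> \<le> (\<Sum>l\<in>I. \<bar>d l\<bar> * (S / 2))"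
    by (intro sum_mono mult_left_mono bound) auto
  also have "\<dots> = S * (S / 2)"
    by (simp add: S_def sum_distrib_right)
  finally show ?thesis
    by (simp add: S_def power2_eq_square)
qed

lemma sum_sq_diff_le_jeffreys_divergence:
  fixes p q :: "'a \<Rightarrow> real"
  assumes "finite I" and p: "\<And>l. l \<in> I \<Longrightarrow> 0 < p l" and q: "\<And>l. l \<in> I \<Longrightarrow> 0 < q l"
    and "sum p I = 1" and "sum q I = 1"
  shows "2 * (\<Sum>l\<in>I. (p l - q l)^2) \<le> (\<Sum>l\<in>I. (p l - q l) * (ln (p l) - ln (q l)))"
proof -
  define d where "d l = p l - q l" for l
  define w where "w l = p l + q l" for l
  have w: "0 < w l" if "l \<in> I" for l
    using p[OF that] q[OF that] by (simp add: w_def)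
  have "2 * (\<Sum>l\<in>I. (d l)^2) \<le> (\<Sum>l\<in>I. \<bar>d l\<bar>)^2"
    using assms by (intro sum_zero_imp_sum_squares_le) (simp_all add: d_def sum_subtractf)
  also have "\<dots> = (\<Sum>l\<in>I. (\<bar>d l\<bar> / sqrt (w l)) * sqrt (w l))^2"
    by (intro arg_cong[where f="\<lambda>x. x^2"] sum.cong) (use w in fastforce)+
  also have "\<dots> \<le> (\<Sum>l\<in>I. (\<bar>d l\<bar> / sqrt (w l))^2) * (\<Sum>l\<in>I. (sqrt (w l))^2)"
    by (rule Cauchy_Schwarz_ineq_sum)
  also have "(\<Sum>l\<in>I. (sqrt (w l))^2) = 2"
    using w assms by (simp add: less_imp_le w_def sum.distrib)
  also have "(\<Sum>l\<in>I. (\<bar>d l\<bar> / sqrt (w l))^2) = (\<Sum>l\<in>I. (d l)^2 / w l)"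
    using w by (intro sum.cong) (auto simp: power_divide less_imp_le)
  also have "(\<Sum>l\<in>I. (d l)^2 / w l) * 2 = (\<Sum>l\<in>I. 2 * (d l)^2 / w l)"
    by (subst mult.commute) (simp add: sum_distrib_left)
  also have "\<dots> \<le> (\<Sum>l\<in>I. (p l - q l) * (ln (p l) - ln (q l)))"
    using p q by (intro sum_mono) (simp add: d_def w_def log_mean_le_arith_mean)
  finally show ?thesis
    by (simp add: d_def)
qed

definition softmax_partition :: "real^('n::finite \<times> 'm::finite) \<Rightarrow> 'n \<Rightarrow> real" where
  "softmax_partition s i = (\<Sum>l\<in>UNIV. exp (s $ (i,l)))"

lemma softmax_partition_pos: "0 < softmax_partition s i"
  unfolding softmax_partition_def by (intro sum_pos) auto

lemma softmax_nth: "softmax s $ (i,l) = exp (s $ (i,l)) / softmax_partition s i"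
  by (simp add: softmax_def softmax_partition_def)

lemma softmax_pos: "0 < softmax s $ (i,l)"
  using softmax_partition_pos[of s i] by (simp add: softmax_nth)

lemma sum_softmax_row: "(\<Sum>l\<in>UNIV. softmax s $ (i,l)) = 1"
  using softmax_partition_pos[of s i]
  by (simp add: softmax_nth softmax_partition_def flip: sum_divide_distrib)

lemma ln_softmax: "ln (softmax s $ (i,l)) = s $ (i,l) - ln (softmax_partition s i)"
  using softmax_partition_pos[of s i] by (simp add: softmax_nth ln_div)

lemma inner_vec_pair:
  "inner (x::real^('a::finite \<times> 'b::finite)) y = (\<Sum>i\<in>UNIV. \<Sum>l\<in>UNIV. x $ (i,l) * y $ (i,l))"
  by (simp add: inner_vec_def sum.cartesian_product)

lemma softmax_row_cocoercive:
  "2 * (\<Sum>l\<in>UNIV. (softmax x $ (i,l) - softmax y $ (i,l))^2)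
     \<le> (\<Sum>l\<in>UNIV. (softmax x $ (i,l) - softmax y $ (i,l)) * (x $ (i,l) - y $ (i,l)))"
proof -
  let ?p = "\<lambda>l. softmax x $ (i,l)" and ?q = "\<lambda>l. softmax y $ (i,l)"
  let ?c = "ln (softmax_partition y i) - ln (softmax_partition x i)"
  have "2 * (\<Sum>l\<in>UNIV. (?p l - ?q l)^2) \<le> (\<Sum>l\<in>UNIV. (?p l - ?q l) * (ln (?p l) - ln (?q l)))"
    by (rule sum_sq_diff_le_jeffreys_divergence) (auto simp: softmax_pos sum_softmax_row)
  also have "\<dots> = (\<Sum>l\<in>UNIV. (?p l - ?q l) * (x $ (i,l) - y $ (i,l)) + (?p l - ?q l) * ?c)"
    by (intro sum.cong refl) (simp add: ln_softmax algebra_simps)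
  also have "\<dots> = (\<Sum>l\<in>UNIV. (?p l - ?q l) * (x $ (i,l) - y $ (i,l))) + (\<Sum>l\<in>UNIV. ?p l - ?q l) * ?c"
    by (simp add: sum.distrib sum_distrib_right)
  also have "(\<Sum>l\<in>UNIV. ?p l - ?q l) = 0"
    by (simp add: sum_subtractf sum_softmax_row)
  finally show ?thesis by simp
qed

lemma fbar_cocoercive:
  fixes x y :: "real^('n::finite \<times> 'm::finite)"
  shows "2 * (norm (fbar x - fbar y))^2 \<le> inner (fbar x - fbar y) (x - y)"
proof -
  have diff: "fbar x - fbar y = softmax x - softmax y"
    by (simp add: fbar_def)
  have "2 * (norm (fbar x - fbar y))^2
      = (\<Sum>i\<in>UNIV. 2 * (\<Sum>l\<in>UNIV. (softmax x $ (i,l) - softmax y $ (i,l))^2))"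
    unfolding diff power2_norm_eq_inner inner_vec_pair
    by (simp add: sum_distrib_left power2_eq_square)
  also have "\<dots> \<le> (\<Sum>i\<in>UNIV. \<Sum>l\<in>UNIV.
      (softmax x $ (i,l) - softmax y $ (i,l)) * (x $ (i,l) - y $ (i,l)))"
    by (intro sum_mono softmax_row_cocoercive)
  also have "\<dots> = inner (fbar x - fbar y) (x - y)"
    by (simp add: diff inner_vec_pair)
  finally show ?thesis .
qed

lemma fbar_zero: "fbar (0::real^('n::finite \<times> 'm::finite)) = 0"
  by (simp add: fbar_def softmax_def vec_eq_iff)

lemma lipschitz_on_fbar: "(1/2)-lipschitz_on U (fbar :: real^('n::finite \<times> 'm::finite) \<Rightarrow> _)"
proof (rule lipschitz_onI)
  fix x y :: "real^('n \<times> 'm)"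
  let ?d = "norm (fbar x - fbar y)"
  have "2 * ?d^2 \<le> ?d * norm (x - y)"
    using fbar_cocoercive[of x y] Cauchy_Schwarz_ineq2[of "fbar x - fbar y" "x - y"] by linarith
  then show "dist (fbar x) (fbar y) \<le> 1/2 * dist x y"
    by (cases "?d = 0") (auto simp: dist_norm power2_eq_square)
qed simp

lemma inner_fbar_ge:
  fixes s :: "real^('n::finite \<times> 'm::finite)"
  shows "2 * (norm (fbar s))^2 \<le> inner (fbar s) s"
  using fbar_cocoercive[of s 0] by (simp add: fbar_zero)

definition softmax_potential :: "real^('n::finite \<times> 'm::finite) \<Rightarrow> real" where
  "softmax_potential s =
     (\<Sum>i\<in>UNIV. ln (softmax_partition s i) - ln CARD('m) - (\<Sum>l\<in>UNIV. s $ (i,l)) / CARD('m))"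

lemma has_derivative_softmax_potential:
  fixes s :: "real^('n::finite \<times> 'm::finite)"
  shows "(softmax_potential has_derivative inner (fbar s)) (at s)"
proof -
  have nth: "((\<lambda>x. x $ p) has_derivative (\<lambda>h. h $ p)) (at s)" for p :: "'n \<times> 'm"
    by (rule bounded_linear_imp_has_derivative[OF bounded_linear_vec_nth])
  have partition: "((\<lambda>x. softmax_partition x i) has_derivative
          (\<lambda>h. \<Sum>l\<in>UNIV. exp (s $ (i,l)) * h $ (i,l))) (at s)" for i
    unfolding softmax_partition_def by (auto intro!: derivative_eq_intros nth simp: mult.commute)
  have "(softmax_potential has_derivative (\<lambda>h. \<Sum>i\<in>UNIV.
      (\<Sum>l\<in>UNIV. exp (s $ (i,l)) * h $ (i,l)) * inverse (softmax_partition s i)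
        - (\<Sum>l\<in>UNIV. h $ (i,l)) / CARD('m))) (at s)"
    unfolding softmax_potential_def
    by (auto intro!: derivative_eq_intros partition nth softmax_partition_pos
        simp: sum_distrib_left divide_inverse ac_simps)
  moreover have "(\<lambda>h. \<Sum>i\<in>UNIV.
      (\<Sum>l\<in>UNIV. exp (s $ (i,l)) * h $ (i,l)) * inverse (softmax_partition s i)
        - (\<Sum>l\<in>UNIV. h $ (i,l)) / CARD('m)) = inner (fbar s)"
    by (auto simp: fun_eq_iff inner_vec_pair fbar_def softmax_nth sum_distrib_left sum_distrib_right
        divide_inverse algebra_simps sum_subtractf)
  ultimately show ?thesis by simp
qed

lemma softmax_potential_zero: "softmax_potential (0::real^('n::finite \<times> 'm::finite)) = 0"
  by (simp add: softmax_potential_def softmax_partition_def)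

lemma softmax_potential_nonneg: "0 \<le> softmax_potential (s::real^('n::finite \<times> 'm::finite))"
  unfolding softmax_potential_def
proof (rule sum_nonneg)
  fix i
  define c where "c = (\<Sum>l\<in>UNIV. s $ (i,l)) / CARD('m)"
  have "CARD('m) * exp c = (\<Sum>l\<in>UNIV. exp c * (1 + (s $ (i,l) - c)))"
    by (simp add: sum.distrib sum_subtractf c_def algebra_simps sum_distrib_right
        flip: sum_distrib_left)
  also have "\<dots> \<le> softmax_partition s i"
    unfolding softmax_partition_def
  proof (intro sum_mono)
    fix l
    have "exp c * (1 + (s $ (i,l) - c)) \<le> exp c * exp (s $ (i,l) - c)"
      by (intro mult_left_mono exp_ge_add_one_self) simp
    then show "exp c * (1 + (s $ (i,l) - c)) \<le> exp (s $ (i,l))"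
      by (simp add: exp_diff)
  qed
  finally have "ln (CARD('m) * exp c) \<le> ln (softmax_partition s i)"
    using softmax_partition_pos[of s i] by (subst ln_le_cancel_iff) auto
  then show "0 \<le> ln (softmax_partition s i) - ln CARD('m) - (\<Sum>l\<in>UNIV. s $ (i,l)) / CARD('m)"
    by (simp add: ln_mult c_def)
qed

lemma inner_symmetric_matrix_vector:
  fixes W :: "real^'k::finite^'k"
  assumes "transpose W = W"
  shows "inner (W *v x) y = inner x (W *v y)"
  by (metis assms dot_lmul_matrix transpose_matrix_vector)

lemma quadratic_form_attains_max:
  fixes W :: "real^'k::finite^'k"
  obtains v where "norm v = 1" and "\<And>x. inner x (W *v x) \<le> inner v (W *v v) * (norm x)^2"
proof -
  let ?q = "\<lambda>x. inner x (W *v x)"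
  have "continuous_on (sphere 0 1) ?q"
    by (intro continuous_intros linear_continuous_on matrix_vector_mul_bounded_linear)
  moreover have "sphere (0::real^'k) 1 \<noteq> {}"
    by (simp add: sphere_eq_empty)
  ultimately obtain v where "v \<in> sphere 0 1" and max: "\<forall>y\<in>sphere 0 1. ?q y \<le> ?q v"
    using continuous_attains_sup[OF compact_sphere] by blast
  moreover have "?q x \<le> ?q v * (norm x)^2" for x
  proof (cases "x = 0")
    case False
    then have "?q (x /\<^sub>R norm x) \<le> ?q v"
      by (intro max[rule_format]) simp
    then show ?thesis
      using False by (simp add: matrix_vector_mult_scaleR field_simps power2_eq_square)
  qed simp
  ultimately show ?thesis
    using that by simp
qed

lemma quadratic_form_maximizer_eigenvector:
  fixes W :: "real^'k::finite^'k"
  assumes sym: "transpose W = W" and v: "norm v = 1"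
    and max: "\<And>x. inner x (W *v x) \<le> inner v (W *v v) * (norm x)^2"
  shows "W *v v = inner v (W *v v) *\<^sub>R v"
proof -
  let ?M = "inner v (W *v v)"
  define r where "r = W *v v - ?M *\<^sub>R v"
  have "((\<lambda>x. inner x (W *v x) - ?M * inner x x) has_derivative
      (\<lambda>h. (inner v (W *v h) + inner h (W *v v)) - ?M * (inner v h + inner h v))) (at v)"
    by (intro has_derivative_diff has_derivative_inner has_derivative_mult_right
        has_derivative_ident bounded_linear_imp_has_derivative matrix_vector_mul_bounded_linear)
  moreover have
    "(inner v (W *v h) + inner h (W *v v)) - ?M * (inner v h + inner h v) = 2 * inner r h" for h
  proof -
    have "inner v (W *v h) = inner (W *v v) h"
      using inner_symmetric_matrix_vector[OF sym, of v h] by simp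
    then show ?thesis
      by (simp add: r_def inner_diff_left inner_commute[of h] algebra_simps)
  qed
  moreover have "\<forall>y\<in>UNIV. inner y (W *v y) - ?M * inner y y \<le> inner v (W *v v) - ?M * inner v v"
    using max v by (simp add: dot_square_norm)
  ultimately have "(\<lambda>h. 2 * inner r h) = (\<lambda>h. 0)"
    by (intro differential_zero_maxmin[of v UNIV]) auto
  then have "2 * inner r r = 0"
    by (rule fun_cong)
  then show ?thesis
    by (simp add: r_def)
qed

lemma finite_eigenvalues_symmetric_matrix:
  fixes W :: "real^'k::finite^'k"
  assumes sym: "transpose W = W"
  shows "finite {\<mu>. \<exists>v. v \<noteq> 0 \<and> W *v v = \<mu> *\<^sub>R v}"
proof -
  let ?E = "{\<mu>. \<exists>v. v \<noteq> 0 \<and> W *v v = \<mu> *\<^sub>R v}"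
  define ev where "ev \<mu> = (SOME v. v \<noteq> 0 \<and> W *v v = \<mu> *\<^sub>R v)" for \<mu>
  have ev: "ev \<mu> \<noteq> 0 \<and> W *v ev \<mu> = \<mu> *\<^sub>R ev \<mu>" if "\<mu> \<in> ?E" for \<mu>
  proof -
    have "\<exists>v. v \<noteq> 0 \<and> W *v v = \<mu> *\<^sub>R v"
      using that by simp
    then show ?thesis
      unfolding ev_def by (rule someI_ex)
  qed
  have orth: "inner (ev a) (ev b) = 0" if "a \<in> ?E" "b \<in> ?E" "a \<noteq> b" for a b
  proof -
    have "a * inner (ev a) (ev b) = inner (W *v ev a) (ev b)"
      using ev[OF that(1)] by simp
    also have "\<dots> = inner (ev a) (W *v ev b)"
      by (rule inner_symmetric_matrix_vector[OF sym])
    also have "\<dots> = b * inner (ev a) (ev b)"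
      using ev[OF that(2)] by simp
    finally show ?thesis
      using that(3) by simp
  qed
  have inj: "inj_on ev ?E"
  proof (rule inj_onI)
    fix a b assume a: "a \<in> ?E" and b: "b \<in> ?E" and "ev a = ev b"
    then have "a *\<^sub>R ev a = b *\<^sub>R ev a"
      using ev[OF a] ev[OF b] by metis
    then show "a = b"
      using ev[OF a] by simp
  qed
  have "pairwise orthogonal (ev ` ?E)"
    unfolding pairwise_def orthogonal_def using orth by blast
  then have "finite (ev ` ?E)"
    by (rule pairwise_orthogonal_imp_finite)
  then show ?thesis
    using finite_imageD inj by blast
qed

lemma quadratic_form_le_mu_max:
  fixes W :: "real^'k::finite^'k"
  assumes sym: "transpose W = W"
  shows "inner x (W *v x) \<le> mu_max W * (norm x)^2"
proof -
  obtain v where v: "norm v = 1" and le: "\<And>x. inner x (W *v x) \<le> inner v (W *v v) * (norm x)^2"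
    using quadratic_form_attains_max[of W] by blast
  then have "v \<noteq> 0" "W *v v = inner v (W *v v) *\<^sub>R v"
    using quadratic_form_maximizer_eigenvector[OF sym] by auto
  then have "inner v (W *v v) \<le> mu_max W"
    unfolding mu_max_def by (intro Max_ge finite_eigenvalues_symmetric_matrix[OF sym]) auto
  then have "inner v (W *v v) * (norm x)^2 \<le> mu_max W * (norm x)^2"
    by (rule mult_right_mono) simp
  then show ?thesis
    using le[of x] by linarith
qed

lemma mu_max_nonneg:
  fixes W :: "real^'k::finite^'k"
  assumes "transpose W = W" and "\<And>p. W $ p $ p = 0"
  shows "0 \<le> mu_max W"
proof -
  obtain k :: 'k where True by blast
  have "inner (axis k 1) (W *v axis k 1) = W $ k $ k"
    by (simp add: inner_axis' matrix_vector_mult_basis column_def)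
  then show ?thesis
    using quadratic_form_le_mu_max[OF assms(1), of "axis k 1"] assms(2) by simp
qed

lemma norm_matrix_vector_le_spec_norm: "norm (W *v v) \<le> spec_norm W * norm v"
  unfolding spec_norm_def by (rule onorm[OF matrix_vector_mul_bounded_linear])

lemma spec_norm_nonneg: "0 \<le> spec_norm W"
  unfolding spec_norm_def by (rule onorm_pos_le[OF matrix_vector_mul_bounded_linear])

lemma lipschitz_on_matrix_vector: "(spec_norm W)-lipschitz_on U (\<lambda>x. W *v x)"
proof (rule lipschitz_onI)
  show "dist (W *v x) (W *v y) \<le> spec_norm W * dist x y" for x y
    using norm_matrix_vector_le_spec_norm[of W "x - y"]
    by (simp add: dist_norm matrix_vector_mult_diff_distrib)
qed (rule spec_norm_nonneg)

lemma abs_inner_matrix_vector_le: "\<bar>inner v (W *v u)\<bar> \<le> spec_norm W * norm u * norm v"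
proof -
  have "\<bar>inner v (W *v u)\<bar> \<le> norm v * norm (W *v u)"
    by (rule Cauchy_Schwarz_ineq2)
  also have "\<dots> \<le> norm v * (spec_norm W * norm u)"
    by (simp add: mult_left_mono norm_matrix_vector_le_spec_norm)
  finally show ?thesis
    by (simp add: mult_ac)
qed

text \<open>eps = sigma / 4 maximises 4 eps (sigma - 2 eps) but is admissible only if sigma < 4 alpha;
  otherwise eps = alpha / (1 + alpha) works.\<close>
lemma exists_eps_dissipation:
  fixes \<alpha> ga \<sigma> w :: real
  assumes \<alpha>: "0 < \<alpha>" and \<sigma>: "0 < \<sigma>" "\<sigma> \<le> 2 * (1 + \<alpha>)" and w: "0 \<le> w"
    and gain: "2 * \<alpha>^2 * (1 + \<alpha>) * w^2 < \<sigma>^2 * ga"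
  shows "\<exists>\<epsilon>. 0 < \<epsilon> \<and> \<epsilon> < \<alpha> \<and> \<alpha> * (\<alpha> - \<epsilon>) * (1 + \<epsilon>) * w^2 < 4 * \<epsilon> * (\<sigma> - 2 * \<epsilon>) * ga"
proof (cases "\<sigma> < 4 * \<alpha>")
  case True
  define \<epsilon> where "\<epsilon> = \<sigma> / 4"
  have \<epsilon>: "0 < \<epsilon>" "\<epsilon> < \<alpha>"
    using True \<sigma> by (auto simp: \<epsilon>_def)
  have "(\<alpha> - \<epsilon>) * (1 + \<epsilon>) \<le> \<alpha> * (1 + \<alpha>)"
    using \<epsilon> by (intro mult_mono) auto
  then have "\<alpha> * ((\<alpha> - \<epsilon>) * (1 + \<epsilon>)) * w^2 \<le> \<alpha> * (\<alpha> * (1 + \<alpha>)) * w^2"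
    using \<alpha> by (intro mult_right_mono mult_left_mono) auto
  then have "\<alpha> * (\<alpha> - \<epsilon>) * (1 + \<epsilon>) * w^2 \<le> \<alpha>^2 * (1 + \<alpha>) * w^2"
    by (simp add: power2_eq_square mult.assoc)
  also have "\<dots> < 4 * \<epsilon> * (\<sigma> - 2 * \<epsilon>) * ga"
    using gain by (simp add: \<epsilon>_def power2_eq_square)
  finally show ?thesis
    using \<epsilon> by blast
next
  case False
  define \<epsilon> where "\<epsilon> = \<alpha> / (1 + \<alpha>)"
  have \<epsilon>: "0 < \<epsilon>" "\<epsilon> < \<alpha>"
    using \<alpha> by (auto simp: \<epsilon>_def field_simps)
  have "\<alpha>^2 * w^2 < \<sigma> * ga"
  proof -
    have "\<alpha>^2 * w^2 * \<sigma> \<le> \<alpha>^2 * w^2 * (2 * (1 + \<alpha>))"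
      using \<sigma> by (intro mult_left_mono) auto
    also have "\<dots> < \<sigma> * ga * \<sigma>"
      using gain by (simp add: power2_eq_square algebra_simps)
    finally show ?thesis
      using \<sigma> by (simp add: mult_ac)
  qed
  have "\<alpha> * (\<alpha> - \<epsilon>) * (1 + \<epsilon>) * w^2 = \<alpha>^2 * w^2 * (\<alpha> * (1 + 2 * \<alpha>) / (1 + \<alpha>)^2)"
    using \<alpha> by (simp add: \<epsilon>_def field_simps power2_eq_square)
  also have "\<dots> \<le> \<alpha>^2 * w^2 * (2 * \<epsilon>)"
  proof (rule mult_left_mono)
    have "\<alpha> * (1 + 2 * \<alpha>) / (1 + \<alpha>)^2 = \<epsilon> * ((1 + 2 * \<alpha>) / (1 + \<alpha>))"
      by (simp add: \<epsilon>_def power2_eq_square)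
    also have "\<dots> \<le> \<epsilon> * 2"
      using \<alpha> \<epsilon> by (intro mult_left_mono) (auto simp: field_simps)
    finally show "\<alpha> * (1 + 2 * \<alpha>) / (1 + \<alpha>)^2 \<le> 2 * \<epsilon>"
      by simp
  qed simp
  also have "\<dots> < \<sigma> * ga * (2 * \<epsilon>)"
    using \<open>\<alpha>^2 * w^2 < \<sigma> * ga\<close> \<epsilon> by simp
  also have "\<dots> \<le> 4 * \<epsilon> * (\<sigma> - 2 * \<epsilon>) * ga"
  proof -
    have "0 < ga"
      using gain \<sigma> \<alpha> by (smt (verit) mult_nonneg_nonneg zero_le_power2 zero_less_mult_iff)
    moreover have "\<sigma> \<le> 2 * (\<sigma> - 2 * \<epsilon>)"
      using False \<epsilon> by simp
    ultimately show ?thesis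
      using \<epsilon> by (simp add: mult_left_mono mult_right_mono algebra_simps)
  qed
  finally show ?thesis
    using \<epsilon> by blast
qed

lemma exists_dissipation_parameters:
  fixes \<alpha> ga \<mu> w :: real
  assumes \<alpha>: "0 < \<alpha>" and \<mu>: "0 \<le> \<mu>" "\<mu> < 2 * (1 + \<alpha>)" and w: "0 \<le> w"
    and gain: "ga > 2 * \<alpha>^2 * (1 + \<alpha>) * w^2 / (2 * (1 + \<alpha>) - \<mu>)^2"
  obtains \<epsilon> \<theta> where "0 < \<epsilon>" "\<epsilon> < \<alpha>" "0 < \<theta>" "\<theta> < 1"
    and "\<alpha> * (\<alpha> - \<epsilon>) * (1 + \<epsilon>) * w^2 \<le> 4 * \<theta> * \<epsilon> * (2 * (1 + (\<alpha> - \<epsilon>)) - \<mu>) * ga"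
proof -
  define \<sigma> where "\<sigma> = 2 * (1 + \<alpha>) - \<mu>"
  have \<sigma>: "0 < \<sigma>" "\<sigma> \<le> 2 * (1 + \<alpha>)"
    using \<mu> by (auto simp: \<sigma>_def)
  have "2 * \<alpha>^2 * (1 + \<alpha>) * w^2 < \<sigma>^2 * ga"
    using gain \<sigma> by (simp add: \<sigma>_def field_simps)
  then obtain \<epsilon> where \<epsilon>: "0 < \<epsilon>" "\<epsilon> < \<alpha>"
    and lt: "\<alpha> * (\<alpha> - \<epsilon>) * (1 + \<epsilon>) * w^2 < 4 * \<epsilon> * (\<sigma> - 2 * \<epsilon>) * ga"
    using exists_eps_dissipation[OF \<alpha> \<sigma> w] by blast
  define R where "R = \<alpha> * (\<alpha> - \<epsilon>) * (1 + \<epsilon>) * w^2"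
  define D where "D = 4 * \<epsilon> * (\<sigma> - 2 * \<epsilon>) * ga"
  have "0 \<le> R" "R < D"
    using \<alpha> \<epsilon> lt by (simp_all add: R_def D_def)
  define \<theta> where "\<theta> = (1 + R / D) / 2"
  have "0 < \<theta>" "\<theta> < 1" "R \<le> \<theta> * D"
    using \<open>0 \<le> R\<close> \<open>R < D\<close> by (auto simp: \<theta>_def field_simps)
  then show ?thesis
    using \<epsilon> by (intro that[of \<epsilon> \<theta>]) (auto simp: R_def D_def \<sigma>_def algebra_simps)
qed

lemma young_ineq_weighted:
  fixes a b c :: real
  assumes "0 < c"
  shows "a * b \<le> c * a^2 + b^2 / (4 * c)"
proof -
  have "0 \<le> (2 * c * a - b)^2"
    by simp
  then have "4 * c * (a * b) \<le> 4 * c * (c * a^2 + b^2 / (4 * c))"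
    using assms by (simp add: power2_eq_square algebra_simps)
  then show ?thesis
    using assms by simp
qed

lemma quadratic_dissipation:
  fixes A S U c g h \<epsilon> \<theta> w :: real
  assumes "0 < \<epsilon>" "0 < h" "0 < \<theta>" "\<theta> \<le> 1"
    and "(g^2 / \<epsilon> + h) * w^2 \<le> 4 * \<theta> * c"
  shows "- c * U^2 - \<epsilon> * A^2 + g * w * U * A + h * w * U * S - h * S^2
           \<le> - ((1 - \<theta>) * min \<epsilon> h) * (A^2 + S^2)"
proof -
  have "g * w * U * A \<le> \<theta> * \<epsilon> * A^2 + (g * w * U)^2 / (4 * (\<theta> * \<epsilon>))"
    using young_ineq_weighted[of "\<theta> * \<epsilon>" A "g * w * U"] assms by (simp add: mult.commute)
  moreover have "h * w * U * S \<le> \<theta> * h * S^2 + (h * w * U)^2 / (4 * (\<theta> * h))"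
    using young_ineq_weighted[of "\<theta> * h" S "h * w * U"] assms by (simp add: mult.commute)
  moreover have "(g * w * U)^2 / (4 * (\<theta> * \<epsilon>)) + (h * w * U)^2 / (4 * (\<theta> * h))
      = (g^2 / \<epsilon> + h) * w^2 * U^2 / (4 * \<theta>)"
    using assms by (simp add: field_simps power2_eq_square)
  moreover have "(g^2 / \<epsilon> + h) * w^2 * U^2 \<le> (4 * \<theta> * c) * U^2"
    using assms(5) by (rule mult_right_mono) simp
  then have "(g^2 / \<epsilon> + h) * w^2 * U^2 / (4 * \<theta>) \<le> c * U^2"
    using assms(3) by (simp add: pos_divide_le_eq mult_ac)
  moreover have "min \<epsilon> h * (A^2 + S^2) \<le> \<epsilon> * A^2 + h * S^2"
    unfolding distrib_left
    by (intro add_mono mult_right_mono min.cobounded1 min.cobounded2 zero_le_power2)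
  then have "(1 - \<theta>) * (min \<epsilon> h * (A^2 + S^2)) \<le> (1 - \<theta>) * (\<epsilon> * A^2 + h * S^2)"
    using assms(4) by (intro mult_left_mono) auto
  ultimately show ?thesis
    by (simp add: algebra_simps)
qed

lemma decrease_from_derivative_bound:
  fixes \<phi> :: "real \<Rightarrow> real"
  assumes "0 \<le> a" "a \<le> b"
    and deriv: "\<And>t. a \<le> t \<Longrightarrow> t \<le> b \<Longrightarrow> (\<phi> has_real_derivative \<phi>' t) (at t within {0..})"
    and bound: "\<And>t. a \<le> t \<Longrightarrow> t \<le> b \<Longrightarrow> \<phi>' t \<le> -k"
  shows "\<phi> b \<le> \<phi> a - k * (b - a)"
proof (cases "a = b")
  case False
  then have "a < b"
    using assms by simp
  have "((\<lambda>t. \<phi> t + k * t) has_derivative (\<lambda>h. (\<phi>' t + k) * h)) (at t within {a..b})"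
    if "a \<le> t" "t \<le> b" for t
  proof -
    have "(\<phi> has_real_derivative \<phi>' t) (at t within {a..b})"
      using deriv[OF that] assms by (auto intro: has_field_derivative_subset)
    then have "((\<lambda>t. \<phi> t + k * t) has_real_derivative \<phi>' t + k) (at t within {a..b})"
      by (auto intro!: derivative_eq_intros)
    then show ?thesis
      by (simp add: has_field_derivative_def)
  qed
  from mvt_simple[OF \<open>a < b\<close> this]
  obtain \<tau> where "\<tau> \<in> {a<..<b}" and "\<phi> b + k * b - (\<phi> a + k * a) = (\<phi>' \<tau> + k) * (b - a)"
    by blast
  moreover have "(\<phi>' \<tau> + k) * (b - a) \<le> 0"
    using bound[of \<tau>] \<open>\<tau> \<in> {a<..<b}\<close> by (intro mult_nonpos_nonneg) auto
  ultimately show ?thesis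
    by (simp add: algebra_simps)
qed simp

lemma has_real_derivative_along_solution:
  assumes "is_solution F x" "0 \<le> t" and "(V has_derivative D) (at (x t))"
  shows "((\<lambda>t. V (x t)) has_real_derivative D (F (x t))) (at t within {0..})"
proof -
  have "(x has_derivative (\<lambda>h. h *\<^sub>R F (x t))) (at t within {0..})"
    using assms(1,2) by (simp add: is_solution_def has_vector_derivative_def)
  from diff_chain_within[OF this has_derivative_at_withinI[OF assms(3)]]
  have "((\<lambda>t. V (x t)) has_derivative (\<lambda>h. D (h *\<^sub>R F (x t)))) (at t within {0..})"
    by (simp add: o_def)
  moreover have "(\<lambda>h. D (h *\<^sub>R F (x t))) = (*) (D (F (x t)))"
    using has_derivative_bounded_linear[OF assms(3)]
    by (simp add: fun_eq_iff linear_simps mult.commute)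
  ultimately show ?thesis
    by (simp add: has_field_derivative_def)
qed

locale strict_lyapunov_function =
  fixes F :: "'a::real_normed_vector \<Rightarrow> 'a" and V :: "'a \<Rightarrow> real" and c \<eta> :: real
  assumes c_pos: "0 < c" and V_ge: "\<And>z. c * (norm z)^2 \<le> V z" and V_zero: "V 0 = 0"
    and \<eta>_pos: "0 < \<eta>"
    and dissipative: "\<And>z. \<exists>D. (V has_derivative D) (at z) \<and> D (F z) \<le> - \<eta> * (norm z)^2"
begin

lemma V_nonneg: "0 \<le> V z"
  using V_ge[of z] c_pos by (smt (verit) mult_nonneg_nonneg zero_le_power2)

lemma decrease_along_solution:
  assumes x: "is_solution F x" and "0 \<le> a" "a \<le> b" "0 \<le> r"
    and r: "\<And>t. a \<le> t \<Longrightarrow> t \<le> b \<Longrightarrow> r \<le> norm (x t)"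
  shows "V (x b) \<le> V (x a) - \<eta> * r^2 * (b - a)"
proof -
  obtain D where D: "\<And>z. (V has_derivative D z) (at z)" "\<And>z. D z (F z) \<le> - \<eta> * (norm z)^2"
    using dissipative by metis
  show ?thesis
  proof (rule decrease_from_derivative_bound[where \<phi>' = "\<lambda>t. D (x t) (F (x t))"])
    fix t assume t: "a \<le> t" "t \<le> b"
    show "((\<lambda>t. V (x t)) has_real_derivative D (x t) (F (x t))) (at t within {0..})"
      using t \<open>0 \<le> a\<close> by (intro has_real_derivative_along_solution[OF x] D) auto
    have "\<eta> * r^2 \<le> \<eta> * (norm (x t))^2"
      using r[OF t] \<open>0 \<le> r\<close> \<eta>_pos by (intro mult_left_mono power_mono) auto
    then show "D (x t) (F (x t)) \<le> - (\<eta> * r^2)"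
      using D(2)[of "x t"] by linarith
  qed (use assms in auto)
qed

lemma norm_solution_le:
  assumes "is_solution F x" "0 \<le> t0" "t0 \<le> t"
  shows "c * (norm (x t))^2 \<le> V (x t0)"
  using decrease_along_solution[OF assms, of 0] V_ge[of "x t"] by simp

lemma solution_enters_ball:
  assumes x: "is_solution F x" and "0 < r"
  shows "\<exists>t0\<ge>0. norm (x t0) < r"
proof (rule ccontr)
  assume outside: "\<not> ?thesis"
  define T where "T = V (x 0) / (\<eta> * r^2) + 1"
  have "0 < \<eta> * r^2"
    using \<eta>_pos \<open>0 < r\<close> by simp
  then have "0 \<le> T"
    unfolding T_def using divide_nonneg_pos[OF V_nonneg] by (smt (verit))
  have "V (x T) \<le> V (x 0) - \<eta> * r^2 * (T - 0)"
    using outside \<open>0 < r\<close> \<open>0 \<le> T\<close>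
    by (intro decrease_along_solution[OF x]) (auto simp: not_less)
  also have "\<dots> = - (\<eta> * r^2)"
    using \<eta>_pos \<open>0 < r\<close> by (simp add: T_def field_simps)
  finally show False
    using V_nonneg[of "x T"] \<open>0 < \<eta> * r^2\<close> by linarith
qed

lemma V_less_near_zero:
  assumes "0 < e"
  shows "\<exists>r>0. \<forall>z. norm z < r \<longrightarrow> V z < e"
proof -
  have "continuous (at 0) V"
    using dissipative[of 0] has_derivative_continuous by blast
  then obtain r where "0 < r" "\<forall>z. dist z 0 < r \<longrightarrow> dist (V z) (V 0) < e"
    using assms unfolding continuous_at_eps_delta by blast
  then show ?thesis
    using V_zero by (auto simp: dist_norm abs_less_iff)
qed

lemma solution_stays_in_ball:
  assumes "is_solution F x" "0 \<le> t0" "t0 \<le> t" "0 < \<epsilon>" "V (x t0) < c * \<epsilon>^2"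
  shows "dist (x t) 0 < \<epsilon>"
proof -
  have "c * (norm (x t))^2 < c * \<epsilon>^2"
    using norm_solution_le[OF assms(1-3)] assms(5) by linarith
  then show ?thesis
    using c_pos \<open>0 < \<epsilon>\<close> by (simp add: power_less_imp_less_base)
qed

theorem globally_asymptotically_stable:
  assumes "F 0 = 0" and "\<And>\<xi>. \<exists>x. is_solution F x \<and> x 0 = \<xi>"
  shows "globally_asymptotically_stable F 0"
proof -
  have small: "\<exists>r>0. \<forall>z. norm z < r \<longrightarrow> V z < c * \<epsilon>^2" if "0 < \<epsilon>" for \<epsilon>
    using V_less_near_zero c_pos that by simp
  have "\<exists>\<delta>>0. \<forall>x. is_solution F x \<and> dist (x 0) 0 < \<delta> \<longrightarrow> (\<forall>t\<ge>0. dist (x t) 0 < \<epsilon>)"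
    if "0 < \<epsilon>" for \<epsilon>
    using small[OF that] solution_stays_in_ball[of _ 0 _ \<epsilon>] that by (auto simp: dist_norm)
  moreover have "(x \<longlongrightarrow> 0) at_top" if x: "is_solution F x" for x
  proof (rule tendstoI)
    fix \<epsilon> :: real assume "0 < \<epsilon>"
    then obtain r where "0 < r" and r: "\<And>z. norm z < r \<Longrightarrow> V z < c * \<epsilon>^2"
      using small by blast
    then obtain t0 where "0 \<le> t0" "norm (x t0) < r"
      using solution_enters_ball[OF x] by blast
    then show "\<forall>\<^sub>F t in at_top. dist (x t) 0 < \<epsilon>"
      unfolding eventually_at_top_linorder
      using solution_stays_in_ball[OF x _ _ \<open>0 < \<epsilon>\<close> r] by blast
  qed
  ultimately show ?thesis
    unfolding globally_asymptotically_stable_def using assms by blast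
qed

end

lemma lipschitz_on_fst: "1-lipschitz_on U fst"
  by (rule lipschitz_onI) (auto simp: dist_fst_le)

lemma lipschitz_on_snd: "1-lipschitz_on U snd"
  by (rule lipschitz_onI) (auto simp: dist_snd_le)

lemma lipschitz_vector_field:
  fixes W :: "real^('n::finite \<times> 'm::finite)^('n \<times> 'm)"
  shows "\<exists>L. L-lipschitz_on UNIV (\<lambda>(s, a). (W *v fbar s - s - a, ga *\<^sub>R fbar s - \<alpha> *\<^sub>R a))"
proof -
  have u: "(1/2 * 1)-lipschitz_on UNIV (\<lambda>z. fbar (fst z :: real^('n \<times> 'm)))"
    by (rule lipschitz_on_compose2[OF lipschitz_on_fst lipschitz_on_fbar])
  have Wu: "(spec_norm W * (1/2 * 1))-lipschitz_on UNIV (\<lambda>z. W *v fbar (fst z :: real^('n \<times> 'm)))"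
    by (rule lipschitz_on_compose2[OF u lipschitz_on_matrix_vector])
  show ?thesis
    unfolding case_prod_beta
    by (rule exI lipschitz_on_Pair lipschitz_on_diff lipschitz_on_cmult u Wu lipschitz_on_fst
        lipschitz_on_snd)+
qed


text \<open>The weights g of the cross term and g (1 + alpha) of |s|^2 make all terms in inner a s
  cancel in the orbital derivative; below g = alpha - eps.\<close>
definition lyapunov ::
    "real \<Rightarrow> real \<Rightarrow> real \<Rightarrow> (real^('n::finite \<times> 'm::finite)) \<times> (real^('n \<times> 'm)) \<Rightarrow> real"
  where "lyapunov ga g \<alpha> z = ga * softmax_potential (fst z) + (norm (snd z))^2 / 2
           - g * inner (snd z) (fst z) + g * (1 + \<alpha>) / 2 * (norm (fst z))^2"

lemma lyapunov_zero: "lyapunov ga g \<alpha> 0 = 0"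
  by (simp add: lyapunov_def softmax_potential_zero)

lemma lyapunov_coercive:
  assumes "0 \<le> ga" "0 < g" "2 * g < 1 + \<alpha>"
  shows "\<exists>c>0. \<forall>z. c * (norm z)^2 \<le> lyapunov ga g \<alpha> z"
proof -
  define c where "c = min (1/4) (g * (1 + \<alpha>) / 2 - g^2)"
  have "0 < g * ((1 + \<alpha>) / 2 - g)"
    using assms by simp
  then have "0 < c"
    by (simp add: c_def algebra_simps power2_eq_square)
  moreover have "c * (norm z)^2 \<le> lyapunov ga g \<alpha> z" for z
  proof -
    obtain s a where z: "z = (s, a)"
      by (cases z)
    let ?k = "g * (1 + \<alpha>) / 2 - g^2"
    have "g * inner a s \<le> norm a * (g * norm s)"
      using Cauchy_Schwarz_ineq2[of a s] assms by (simp add: mult_left_mono)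
    also have "\<dots> \<le> 1/4 * (norm a)^2 + g^2 * (norm s)^2"
      using young_ineq_weighted[of "1/4" "norm a" "g * norm s"] by (simp add: power_mult_distrib)
    finally have "g * inner a s \<le> 1/4 * (norm a)^2 + g^2 * (norm s)^2" .
    moreover have "0 \<le> ga * softmax_potential s"
      by (rule mult_nonneg_nonneg[OF assms(1) softmax_potential_nonneg])
    moreover have "lyapunov ga g \<alpha> z = ga * softmax_potential s + (norm a)^2 / 2 - g * inner a s
        + ?k * (norm s)^2 + g^2 * (norm s)^2"
      by (simp add: lyapunov_def z algebra_simps)
    moreover have "c * (norm z)^2 = c * (norm a)^2 + c * (norm s)^2"
      by (simp add: z norm_Pair distrib_left)
    moreover have "c * (norm a)^2 \<le> 1/4 * (norm a)^2" "c * (norm s)^2 \<le> ?k * (norm s)^2"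
      unfolding c_def by (intro mult_right_mono min.cobounded1 min.cobounded2 zero_le_power2)+
    ultimately show ?thesis
      by linarith
  qed
  ultimately show ?thesis
    by blast
qed

lemma lyapunov_orbital_derivative:
  fixes W :: "real^('n::finite \<times> 'm::finite)^('n \<times> 'm)"
  shows "\<exists>D. (lyapunov ga g \<alpha> has_derivative D) (at (s, a)) \<and>
    D (W *v fbar s - s - a, ga *\<^sub>R fbar s - \<alpha> *\<^sub>R a)
      = ga * inner (fbar s) (W *v fbar s) - ga * (1 + g) * inner (fbar s) s
        - (\<alpha> - g) * (norm a)^2 - g * inner a (W *v fbar s)
        + g * (1 + \<alpha>) * inner s (W *v fbar s) - g * (1 + \<alpha>) * (norm s)^2"
proof -
  have fst: "(fst has_derivative fst) (at (s, a))"
    by (rule bounded_linear_imp_has_derivative[OF bounded_linear_fst])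
  have potential:
    "((\<lambda>z. softmax_potential (fst z)) has_derivative (\<lambda>d. inner (fbar s) (fst d))) (at (s, a))"
    using diff_chain_at[OF fst has_derivative_softmax_potential] by (simp add: o_def)
  define D where "D d = ga * inner (fbar s) (fst d) + inner a (snd d)
      - g * (inner (snd d) s + inner a (fst d)) + g * (1 + \<alpha>) * inner s (fst d)" for d
  have "(lyapunov ga g \<alpha> has_derivative D) (at (s, a))"
    unfolding lyapunov_def[abs_def] D_def[abs_def] using potential
    by (auto intro!: derivative_eq_intros simp: power2_norm_eq_inner algebra_simps inner_commute)
  moreover have "D (W *v fbar s - s - a, ga *\<^sub>R fbar s - \<alpha> *\<^sub>R a)
      = ga * inner (fbar s) (W *v fbar s) - ga * (1 + g) * inner (fbar s) s
        - (\<alpha> - g) * (norm a)^2 - g * inner a (W *v fbar s)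
        + g * (1 + \<alpha>) * inner s (W *v fbar s) - g * (1 + \<alpha>) * (norm s)^2"
    by (simp add: D_def inner_diff_left inner_diff_right power2_norm_eq_inner algebra_simps
        inner_commute)
  ultimately show ?thesis
    by blast
qed

lemma lyapunov_orbital_derivative_le:
  fixes W :: "real^('n::finite \<times> 'm::finite)^('n \<times> 'm)"
  assumes sym: "transpose W = W" and "0 \<le> ga" "0 \<le> g" "0 \<le> \<alpha>"
  shows "\<exists>D. (lyapunov ga g \<alpha> has_derivative D) (at (s, a)) \<and>
    D (W *v fbar s - s - a, ga *\<^sub>R fbar s - \<alpha> *\<^sub>R a)
      \<le> - (ga * (2 * (1 + g) - mu_max W)) * (norm (fbar s))^2 - (\<alpha> - g) * (norm a)^2
        + g * spec_norm W * norm (fbar s) * norm a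
        + g * (1 + \<alpha>) * spec_norm W * norm (fbar s) * norm s - g * (1 + \<alpha>) * (norm s)^2"
proof -
  define u where "u = fbar s"
  define w where "w = spec_norm W"
  define h where "h = g * (1 + \<alpha>)"
  have "0 \<le> h"
    using assms by (simp add: h_def)
  obtain D where "(lyapunov ga g \<alpha> has_derivative D) (at (s, a))"
    and "D (W *v u - s - a, ga *\<^sub>R u - \<alpha> *\<^sub>R a)
      = ga * inner u (W *v u) - ga * (1 + g) * inner u s - (\<alpha> - g) * (norm a)^2
        - g * inner a (W *v u) + h * inner s (W *v u) - h * (norm s)^2"
    using lyapunov_orbital_derivative[of ga g \<alpha> s a W] by (auto simp: h_def u_def)
  moreover have "ga * inner u (W *v u) \<le> ga * (mu_max W * (norm u)^2)"
    using quadratic_form_le_mu_max[OF sym] assms by (intro mult_left_mono) auto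
  moreover have "ga * (1 + g) * (2 * (norm u)^2) \<le> ga * (1 + g) * inner u s"
    using inner_fbar_ge[of s] assms by (intro mult_left_mono) (auto simp: u_def)
  moreover have "- inner v (W *v u) \<le> w * norm u * norm v" "inner v (W *v u) \<le> w * norm u * norm v"
    for v
    using abs_inner_matrix_vector_le[of v W u] by (simp_all add: w_def abs_le_iff)
  then have "g * (- inner a (W *v u)) \<le> g * (w * norm u * norm a)"
    and "h * inner s (W *v u) \<le> h * (w * norm u * norm s)"
    using assms \<open>0 \<le> h\<close> by (intro mult_left_mono; simp)+
  ultimately show ?thesis
    unfolding u_def[symmetric] w_def[symmetric] h_def[symmetric]
    by (intro exI[of _ D] conjI) (auto simp: algebra_simps)
qed

lemma lyapunov_dissipation:
  fixes W :: "real^('n::finite \<times> 'm::finite)^('n \<times> 'm)"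
  assumes sym: "transpose W = W" and ga: "0 < ga" and \<epsilon>: "0 < \<epsilon>" "\<epsilon> < \<alpha>"
    and \<theta>: "0 < \<theta>" "\<theta> < 1"
    and cond: "\<alpha> * (\<alpha> - \<epsilon>) * (1 + \<epsilon>) * (spec_norm W)^2
      \<le> 4 * \<theta> * \<epsilon> * (2 * (1 + (\<alpha> - \<epsilon>)) - mu_max W) * ga"
  shows "\<exists>D. (lyapunov ga (\<alpha> - \<epsilon>) \<alpha> has_derivative D) (at z) \<and>
    D ((\<lambda>(s, a). (W *v fbar s - s - a, ga *\<^sub>R fbar s - \<alpha> *\<^sub>R a)) z)
      \<le> - ((1 - \<theta>) * min \<epsilon> ((\<alpha> - \<epsilon>) * (1 + \<alpha>))) * (norm z)^2"
proof -
  obtain s a where z: "z = (s, a)"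
    by (cases z)
  define g where "g = \<alpha> - \<epsilon>"
  define h where "h = g * (1 + \<alpha>)"
  define w where "w = spec_norm W"
  have "0 < g" "0 < h"
    using \<epsilon> by (simp_all add: g_def h_def)
  have "(g^2 / \<epsilon> + h) * w^2 = \<alpha> * g * (1 + \<epsilon>) * w^2 / \<epsilon>"
    using \<epsilon> by (simp add: g_def h_def field_simps power2_eq_square)
  also have "\<dots> \<le> 4 * \<theta> * (ga * (2 * (1 + g) - mu_max W))"
    using cond \<epsilon> by (simp add: pos_divide_le_eq g_def w_def mult_ac)
  finally have "- (ga * (2 * (1 + g) - mu_max W)) * (norm (fbar s))^2 - \<epsilon> * (norm a)^2
      + g * w * norm (fbar s) * norm a + h * w * norm (fbar s) * norm s - h * (norm s)^2
      \<le> - ((1 - \<theta>) * min \<epsilon> h) * ((norm a)^2 + (norm s)^2)"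
    using \<epsilon> \<theta> \<open>0 < h\<close> by (intro quadratic_dissipation) auto
  moreover obtain D where "(lyapunov ga g \<alpha> has_derivative D) (at (s, a))"
    and "D (W *v fbar s - s - a, ga *\<^sub>R fbar s - \<alpha> *\<^sub>R a)
      \<le> - (ga * (2 * (1 + g) - mu_max W)) * (norm (fbar s))^2 - \<epsilon> * (norm a)^2
        + g * w * norm (fbar s) * norm a + h * w * norm (fbar s) * norm s - h * (norm s)^2"
    using lyapunov_orbital_derivative_le[OF sym, of ga g \<alpha> s a] ga \<epsilon> \<open>0 < g\<close>
    by (auto simp: g_def h_def w_def mult_ac)
  moreover have "(norm z)^2 = (norm a)^2 + (norm s)^2"
    by (simp add: z norm_Pair)
  ultimately show ?thesis
    unfolding z g_def h_def by force
qed

lemma strict_lyapunov_function_lyapunov: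
  fixes W :: "real^('n::finite \<times> 'm::finite)^('n \<times> 'm)"
  assumes "transpose W = W" "0 < ga" and \<epsilon>: "0 < \<epsilon>" "\<epsilon> < \<alpha>" and \<alpha>: "\<alpha> < 1"
    and \<theta>: "0 < \<theta>" "\<theta> < 1"
    and "\<alpha> * (\<alpha> - \<epsilon>) * (1 + \<epsilon>) * (spec_norm W)^2
      \<le> 4 * \<theta> * \<epsilon> * (2 * (1 + (\<alpha> - \<epsilon>)) - mu_max W) * ga"
  shows "\<exists>c \<eta>. strict_lyapunov_function (\<lambda>(s, a). (W *v fbar s - s - a, ga *\<^sub>R fbar s - \<alpha> *\<^sub>R a))
      (lyapunov ga (\<alpha> - \<epsilon>) \<alpha>) c \<eta>"
proof -
  obtain c where "0 < c"
    and V_ge: "\<forall>z :: (real^('n \<times> 'm)) \<times> (real^('n \<times> 'm)). c * (norm z)^2 \<le> lyapunov ga (\<alpha> - \<epsilon>) \<alpha> z"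
    using lyapunov_coercive[of ga "\<alpha> - \<epsilon>" \<alpha>] assms by auto
  define \<eta> where "\<eta> = (1 - \<theta>) * min \<epsilon> ((\<alpha> - \<epsilon>) * (1 + \<alpha>))"
  have "strict_lyapunov_function (\<lambda>(s, a). (W *v fbar s - s - a, ga *\<^sub>R fbar s - \<alpha> *\<^sub>R a))
      (lyapunov ga (\<alpha> - \<epsilon>) \<alpha>) c \<eta>"
  proof
    show "0 < \<eta>"
      using \<epsilon> \<theta> by (simp add: \<eta>_def)
    show "\<exists>D. (lyapunov ga (\<alpha> - \<epsilon>) \<alpha> has_derivative D) (at z) \<and>
        D ((\<lambda>(s, a). (W *v fbar s - s - a, ga *\<^sub>R fbar s - \<alpha> *\<^sub>R a)) z) \<le> - \<eta> * (norm z)^2" for z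
      unfolding \<eta>_def by (rule lyapunov_dissipation[OF assms(1-4,6-8)])
  qed (use \<open>0 < c\<close> V_ge lyapunov_zero in auto)
  then show ?thesis
    by blast
qed

theorem proposition2:
  fixes W :: "real^('n::finite \<times> 'm::finite)^('n \<times> 'm)"
    and \<alpha> ga :: real
  assumes m2: "CARD('m) \<ge> 2"
    and alpha: "0 < \<alpha>" "\<alpha> < 1"
    and ga_pos: "ga > 0"
    and S: "\<forall>i j l. W $ (i,j) $ (i,l) = 0"
    and A1: "transpose W = W"
    and A2_A3: "\<exists>lam::'n \<Rightarrow> 'n \<Rightarrow> real.
                  (\<forall>i k j. (\<Sum>l\<in>UNIV. W $ (i,j) $ (k,l)) = lam i k) \<and>
                  (\<forall>i k. lam i k = lam k i)"
    and mu: "mu_max W < 2 * (1 + \<alpha>)"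
    and gain: "ga > 2 * \<alpha>\<^sup>2 * (1 + \<alpha>) * (spec_norm W)\<^sup>2 / (2 * (1 + \<alpha>) - mu_max W)\<^sup>2"
  shows "globally_asymptotically_stable
           (\<lambda>(s, a). (W *v fbar s - s - a, ga *\<^sub>R fbar s - \<alpha> *\<^sub>R a)) (0, 0)"
proof -
  let ?F = "\<lambda>(s, a). (W *v fbar s - s - a, ga *\<^sub>R fbar s - \<alpha> *\<^sub>R a)"
  have "W $ p $ p = 0" for p
    using S by (cases p) auto
  then obtain \<epsilon> \<theta> where \<epsilon>: "0 < \<epsilon>" "\<epsilon> < \<alpha>" and \<theta>: "0 < \<theta>" "\<theta> < 1"
    and cond: "\<alpha> * (\<alpha> - \<epsilon>) * (1 + \<epsilon>) * (spec_norm W)^2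
      \<le> 4 * \<theta> * \<epsilon> * (2 * (1 + (\<alpha> - \<epsilon>)) - mu_max W) * ga"
    using exists_dissipation_parameters[OF alpha(1) mu_max_nonneg[OF A1] mu spec_norm_nonneg gain]
    by blast
  obtain c \<eta> where "strict_lyapunov_function ?F (lyapunov ga (\<alpha> - \<epsilon>) \<alpha>) c \<eta>"
    using strict_lyapunov_function_lyapunov[OF A1 ga_pos \<epsilon> alpha(2) \<theta> cond] by blast
  moreover obtain L where "L-lipschitz_on UNIV ?F"
    using lipschitz_vector_field by blast
  ultimately have "globally_asymptotically_stable ?F 0"
    by (intro strict_lyapunov_function.globally_asymptotically_stable lipschitz_imp_solution_exists)
      (auto simp: zero_prod_def fbar_zero)
  then show ?thesis
    by (simp add: zero_prod_def)
qed

end
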